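(* Let $\mathbb{X}$ be an $n$-dimensional real polyhedral Banach space and $F$ a facet of $B_{\mathbb{X}}$. Then for every integer $k$ with $1\le k<n$, $\operatorname{Ext}F\subseteq\overline{k\text{-}\operatorname{Sm}\mathbb{X}\cap F}$.
   Context: A finite-dimensional Banach space is polyhedral if its closed unit ball has finitely many extreme points. A convex subset $F$ of a convex set $C$ is a face of $C$ if whenever $a,b\in C$, $0<t<1$, $(1-t)a+tb\in F$, then $a,b\in F$; a facet is a maximal proper face of $B_{\mathbb{X}}$ (here of dimension $n-1$). For non-zero $z$, $J(z)=\{f\in\mathbb{X}^*:\|f\|=1,\ f(z)=\|z\|\}$; $z$ is $k$-smooth if $\dim\operatorname{span}J(z)=k$, and $k\text{-}\operatorname{Sm}\mathbb{X}$ is the set of $k$-smooth points. $\operatorname{Ext}F$ is the set of extreme points of $F$. *)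

theory Defs
  imports "HOL-Analysis.Analysis"
begin

definition polyhedral_space :: "'a::real_normed_vector itself \<Rightarrow> bool" where
  "polyhedral_space _ \<longleftrightarrow> finite {x::'a. x extreme_point_of cball 0 1}"

definition facet_max :: "'a::real_vector set \<Rightarrow> 'a set \<Rightarrow> bool" where
  "facet_max F C \<longleftrightarrow> F face_of C \<and> F \<noteq> C \<and>
     (\<forall>G. G face_of C \<and> G \<noteq> C \<and> F \<subseteq> G \<longrightarrow> G = F)"

definition supp_funcs :: "'a::real_normed_vector \<Rightarrow> ('a \<Rightarrow>\<^sub>L real) set" where
  "supp_funcs z = {f. norm f = 1 \<and> blinfun_apply f z = norm z}"

definition k_smooth :: "nat \<Rightarrow> 'a::real_normed_vector set" where
  "k_smooth k = {z. z \<noteq> 0 \<and> dim (span (supp_funcs z)) = k}"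

end

theory Submission
  imports Defs
begin

text \<open>The unit ball is the convex hull of its finitely many vertices (Krein--Milman, proved
  directly by splitting points along the directions in which they can move). This makes every
  linear functional bounded and gives the facet description of the ball: a point outside is
  separated by the facet through which a generic segment from the interior leaves the ball.
  At a unit vector z the support functionals span the same space as the facet functionals active
  at z, so z is k-smooth iff the active facet functionals span a k-dimensional space.

  A facet F is exposed by a single facet functional \<phi>, and at an extreme point x of F the
  active facet functionals span the whole dual. The directions in which one can leave x staying
  in F form a polyhedral cone; moving a short distance along an extreme ray of one of its faces
  lowers the dimension of the active set by exactly one while keeping \<phi> active. Repeating this
  with ever shorter steps produces k-smooth points of F arbitrarily close to x for 1 \<le> k < n.\<close>

lemma finite_line_Int_subspace:
  fixes a b :: "'a::real_vector"
  assumes U: "subspace U" and ab: "a \<notin> U \<or> b \<notin> U"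
  shows "finite {t::real. a + t *\<^sub>R b \<in> U}"
proof -
  have eq: "t = t'" if t: "a + t *\<^sub>R b \<in> U" and t': "a + t' *\<^sub>R b \<in> U" for t t'
  proof (rule ccontr)
    assume "t \<noteq> t'"
    have "(t - t') *\<^sub>R b \<in> U"
      using subspace_diff[OF U t t'] by (simp add: algebra_simps)
    then have "inverse (t - t') *\<^sub>R ((t - t') *\<^sub>R b) \<in> U"
      by (rule subspace_scale[OF U])
    then have "b \<in> U" using \<open>t \<noteq> t'\<close> by simp
    moreover from this have "(a + t *\<^sub>R b) - t *\<^sub>R b \<in> U"
      by (intro subspace_diff[OF U t] subspace_scale[OF U])
    then have "a \<in> U" by simp
    ultimately show False using ab by blast
  qed
  show ?thesis
  proof (cases "\<exists>t0. a + t0 *\<^sub>R b \<in> U")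
    case True
    then obtain t0 where "a + t0 *\<^sub>R b \<in> U" by blast
    with eq have "{t. a + t *\<^sub>R b \<in> U} \<subseteq> {t0}" by blast
    then show ?thesis using finite_subset by blast
  qed simp
qed

lemma ex_not_in_finite_Union_proper_subspaces:
  fixes UU :: "'a::real_vector set set"
  assumes "finite UU" "\<forall>U\<in>UU. subspace U \<and> U \<noteq> UNIV"
  obtains d where "\<forall>U\<in>UU. d \<notin> U"
  using assms
proof (induction UU arbitrary: thesis rule: finite_induct)
  case empty then show ?case by simp
next
  case (insert U0 UU)
  then obtain a where a: "\<forall>U\<in>UU. a \<notin> U" by auto
  have U0: "subspace U0" "U0 \<noteq> UNIV" using insert.prems by auto
  show ?case
  proof (cases "a \<in> U0")
    case False then show ?thesis using a insert.prems(1) by blast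
  next
    case True
    obtain b where b: "b \<notin> U0" using U0 by auto
    have "finite {t::real. a + t *\<^sub>R b \<in> U}" if "U \<in> UU" for U
      using insert.prems(2) a that by (intro finite_line_Int_subspace) auto
    then have "finite (insert 0 (\<Union>U\<in>UU. {t::real. a + t *\<^sub>R b \<in> U}))"
      using insert.hyps(1) by blast
    then obtain t where "t \<notin> insert 0 (\<Union>U\<in>UU. {t::real. a + t *\<^sub>R b \<in> U})"
      using ex_new_if_finite[OF infinite_UNIV_char_0] by blast
    then have t: "t \<noteq> 0" "\<forall>U\<in>UU. a + t *\<^sub>R b \<notin> U" by auto
    have "a + t *\<^sub>R b \<notin> U0"
    proof
      assume "a + t *\<^sub>R b \<in> U0"
      then have "inverse t *\<^sub>R ((a + t *\<^sub>R b) - a) \<in> U0"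
        using True U0(1) by (intro subspace_scale subspace_diff) auto
      with t(1) b show False by simp
    qed
    with t(2) show ?thesis by (intro insert.prems(1)[of "a + t *\<^sub>R b"]) auto
  qed
qed

lemma ex_in_ball_avoiding_subspaces:
  fixes UU :: "'a::real_normed_vector set set"
  assumes fin: "finite UU" and UU: "\<forall>U\<in>UU. subspace U \<and> U \<noteq> UNIV" and r: "r > 0"
  obtains p where "norm p < r" "\<forall>U\<in>UU. p - x \<notin> U"
proof (cases "UU = {}")
  case True then show ?thesis using that[of 0] r by auto
next
  case False
  obtain d where d: "\<forall>U\<in>UU. d \<notin> U" using ex_not_in_finite_Union_proper_subspaces[OF fin UU] by blast
  moreover obtain U where "U \<in> UU" using False by blast
  ultimately have d0: "d \<noteq> 0" using UU subspace_0 by metis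
  have "finite {t::real. - x + t *\<^sub>R d \<in> U}" if "U \<in> UU" for U
    using UU d that by (intro finite_line_Int_subspace) auto
  then have "finite (\<Union>U\<in>UU. {t::real. - x + t *\<^sub>R d \<in> U})"
    using fin by blast
  moreover have "infinite {0<..<r / norm d}" using r d0 by simp
  ultimately have "\<not> {0<..<r / norm d} \<subseteq> (\<Union>U\<in>UU. {t::real. - x + t *\<^sub>R d \<in> U})"
    using finite_subset by blast
  then obtain t where t: "t \<in> {0<..<r / norm d}" "\<forall>U\<in>UU. - x + t *\<^sub>R d \<notin> U"
    by blast
  have "norm (t *\<^sub>R d) < r" using t(1) d0 by (simp add: field_simps)
  moreover have "\<forall>U\<in>UU. t *\<^sub>R d - x \<notin> U" using t(2) by (simp add: algebra_simps)
  ultimately show ?thesis by (rule that)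
qed

lemma diff_in_span_if_in_convex_hull:
  assumes "y \<in> convex hull T"
  shows "y - x \<in> span ((\<lambda>e. e - x) ` T)"
proof -
  have "convex ((+) x ` span ((\<lambda>e. e - x) ` T))"
    by (intro convex_translation subspace_imp_convex subspace_span)
  moreover have "T \<subseteq> (+) x ` span ((\<lambda>e. e - x) ` T)"
  proof
    fix e assume "e \<in> T"
    then have "e - x \<in> span ((\<lambda>e. e - x) ` T)" by (intro span_base) auto
    then show "e \<in> (+) x ` span ((\<lambda>e. e - x) ` T)" by (force simp: image_iff)
  qed
  ultimately have "convex hull T \<subseteq> (+) x ` span ((\<lambda>e. e - x) ` T)"
    by (rule hull_minimal[rotated])
  with assms show ?thesis by auto
qed

lemma norm_convex_comb_le_1:
  fixes u v :: "'a::real_normed_vector"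
  assumes "norm u \<le> 1" "norm v \<le> 1" "0 \<le> t" "t \<le> 1"
  shows "norm ((1 - t) *\<^sub>R u + t *\<^sub>R v) \<le> 1"
  using convexD_alt[OF convex_cball, of u 0 1 v t] assms by simp

lemma segment_crosses_unit_sphere:
  fixes p x :: "'a::real_normed_vector"
  assumes "norm p < 1" "norm x > 1"
  obtains \<tau> where "0 < \<tau>" "\<tau> < 1" "norm ((1 - \<tau>) *\<^sub>R p + \<tau> *\<^sub>R x) = 1"
proof -
  have "continuous_on {0..1} (\<lambda>\<tau>::real. norm ((1 - \<tau>) *\<^sub>R p + \<tau> *\<^sub>R x))"
    by (intro continuous_intros)
  then obtain \<tau> where "0 \<le> \<tau>" "\<tau> \<le> 1" "norm ((1 - \<tau>) *\<^sub>R p + \<tau> *\<^sub>R x) = 1"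
    using IVT'[of "\<lambda>\<tau>::real. norm ((1 - \<tau>) *\<^sub>R p + \<tau> *\<^sub>R x)" 0 1 1] assms by auto
  moreover from this have "\<tau> \<noteq> 0" "\<tau> \<noteq> 1" using assms by auto
  ultimately show ?thesis by (intro that[of \<tau>]) auto
qed

lemma face_of_supporting_functional:
  fixes f :: "'a::real_vector \<Rightarrow> real"
  assumes "convex S" "linear f" and le: "\<forall>x\<in>S. f x \<le> c"
  shows "S \<inter> {x. f x = c} face_of S"
  unfolding face_of_def
proof (intro conjI ballI impI)
  have "convex (f -` {c})" by (rule convex_linear_vimage[OF assms(2)]) simp
  then show "convex (S \<inter> {x. f x = c})"
    using assms(1) by (simp add: convex_Int vimage_def)
  fix a b x assume a: "a \<in> S" and b: "b \<in> S" and x: "x \<in> S \<inter> {x. f x = c}"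
    and "x \<in> open_segment a b"
  then obtain u where u: "0 < u" "u < 1" and "x = (1 - u) *\<^sub>R a + u *\<^sub>R b"
    by (auto simp: in_segment)
  then have sum: "(1 - u) * f a + u * f b = c"
    using x linear_add[OF assms(2)] linear_scale[OF assms(2)] by auto
  have "(1 - u) * f a \<le> (1 - u) * c" "u * f b \<le> u * c"
    using u le a b by (auto intro: mult_left_mono)
  moreover have "(1 - u) * c + u * c = c" by (simp add: algebra_simps)
  ultimately have "(1 - u) * f a = (1 - u) * c" "u * f b = u * c"
    using sum by linarith+
  then have "f a = c" "f b = c" using u by simp_all
  then show "a \<in> S \<inter> {x. f x = c}" "b \<in> S \<inter> {x. f x = c}" using a b by auto
qed auto

lemma face_of_cball_subset_sphere:
  fixes F :: "'a::real_normed_vector set"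
  assumes "F face_of cball 0 1" "F \<noteq> cball 0 1"
  shows "F \<subseteq> sphere 0 1"
proof -
  have "ball 0 1 \<subseteq> interior (cball (0::'a) 1)" by (rule interior_maximal) auto
  then have "F \<inter> ball 0 1 = {}" using face_of_disjoint_interior[OF assms] by blast
  then show ?thesis using face_of_imp_subset[OF assms(1)] by fastforce
qed

lemma ex_uniform_margin:
  fixes a b :: "'b \<Rightarrow> real"
  assumes "finite A" "\<forall>f\<in>A. a f < 1"
  obtains \<epsilon> where "\<epsilon> > 0" "\<forall>f\<in>A. \<forall>t. \<bar>t\<bar> \<le> \<epsilon> \<longrightarrow> a f + t * b f < 1"
proof -
  have "\<forall>\<^sub>F t in nhds 0. a f + t * b f < 1" if "f \<in> A" for f
    using assms(2) that
    by (intro order_tendstoD(2)[of _ "a f"]) (auto intro!: tendsto_eq_intros filterlim_ident)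
  then have "\<forall>\<^sub>F t in nhds 0. \<forall>f\<in>A. a f + t * b f < 1"
    using assms(1) by (simp add: eventually_ball_finite)
  then obtain d where "d > 0" "\<forall>t. dist t 0 < d \<longrightarrow> (\<forall>f\<in>A. a f + t * b f < 1)"
    by (auto simp: eventually_nhds_metric)
  then show ?thesis by (intro that[of "d / 2"]) auto
qed

text \<open>The ratio test of the simplex method.\<close>
lemma ratio_test:
  fixes a b :: "'b \<Rightarrow> real"
  assumes "finite A" and a: "\<forall>f\<in>A. a f \<le> 0" and b: "\<exists>f\<in>A. b f > 0"
  obtains t g where "t \<ge> 0" "g \<in> A" "b g > 0" "a g + t * b g = 0" "\<forall>f\<in>A. a f + t * b f \<le> 0"
proof -
  define P where "P = {f\<in>A. b f > 0}"
  define r where "r f = - a f / b f" for f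
  have "finite P" "P \<noteq> {}" using assms by (auto simp: P_def)
  then obtain g where g: "g \<in> P" "\<forall>f\<in>P. r g \<le> r f"
    using arg_min_if_finite[of P r] by (metis not_less)
  have gA: "g \<in> A" and bg: "b g > 0" using g(1) by (auto simp: P_def)
  have rg: "r g \<ge> 0" using a gA bg by (simp add: r_def divide_nonpos_pos)
  show ?thesis
  proof (rule that[OF rg gA bg])
    show "a g + r g * b g = 0" using bg by (simp add: r_def)
    show "\<forall>f\<in>A. a f + r g * b f \<le> 0"
    proof
      fix f assume f: "f \<in> A"
      show "a f + r g * b f \<le> 0"
      proof (cases "b f > 0")
        case True
        then have "r g \<le> - a f / b f" using g(2) f by (auto simp: P_def r_def)
        with True show ?thesis by (simp add: field_simps)
      next
        case False
        then have "r g * b f \<le> 0" using rg by (simp add: mult_nonneg_nonpos)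
        moreover have "a f \<le> 0" using a f by blast
        ultimately show ?thesis by linarith
      qed
    qed
  qed
qed

lemma abs_blinfun_le_norm_if_le_on_cball:
  fixes f :: "'a::real_normed_vector \<Rightarrow>\<^sub>L real"
  assumes "\<forall>z. norm z \<le> 1 \<longrightarrow> f z \<le> 1"
  shows "\<bar>f x\<bar> \<le> norm x"
proof (cases "x = 0")
  case False
  then have "f (x /\<^sub>R norm x) \<le> 1" "f (- (x /\<^sub>R norm x)) \<le> 1" using assms by simp_all
  then show ?thesis using False by (simp add: blinfun.scaleR_right blinfun.minus_right field_simps)
qed simp

lemma blinfun_eq_0_if_in_span:
  fixes S :: "('a::real_normed_vector \<Rightarrow>\<^sub>L real) set"
  assumes "\<forall>f\<in>S. f x = 0" and "g \<in> span S"
  shows "g x = 0"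
  using linear_eq_0_on_span[OF bounded_linear.linear[OF blinfun.bounded_linear_left]] assms by blast

lemma blinfun_in_span_if_common_kernel:
  fixes S :: "('a::real_normed_vector \<Rightarrow>\<^sub>L real) set" and g :: "'a \<Rightarrow>\<^sub>L real"
  assumes "finite S" and "\<forall>x. (\<forall>f\<in>S. f x = 0) \<longrightarrow> g x = 0"
  shows "g \<in> span S"
  using assms
proof (induction S arbitrary: g rule: finite_induct)
  case empty
  then have "g = 0" by (intro blinfun_eqI) simp
  then show ?case by (simp add: span_zero)
next
  case (insert h S)
  show ?case
  proof (cases "\<forall>x. (\<forall>f\<in>S. f x = 0) \<longrightarrow> h x = 0")
    case True
    then have "g \<in> span S" using insert.prems by (intro insert.IH) auto
    then show ?thesis by (meson span_mono subsetD subset_insertI)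
  next
    case False
    then obtain x0 where x0: "\<forall>f\<in>S. f x0 = 0" "h x0 \<noteq> 0" by blast
    text \<open>Subtracting a multiple of h that kills x0 reduces to the kernel of S alone.\<close>
    define c where "c = g x0 / h x0"
    have "g - c *\<^sub>R h \<in> span S"
    proof (rule insert.IH, intro allI impI)
      fix x assume "\<forall>f\<in>S. f x = 0"
      then have "\<forall>f\<in>insert h S. f (x - (h x / h x0) *\<^sub>R x0) = 0"
        using x0 by (auto simp: blinfun.diff_right blinfun.scaleR_right)
      then have "g (x - (h x / h x0) *\<^sub>R x0) = 0" using insert.prems by blast
      then show "(g - c *\<^sub>R h) x = 0"
        using x0(2) by (simp add: c_def blinfun.diff_left blinfun.diff_right blinfun.scaleR_left
            blinfun.scaleR_right field_simps)
    qed
    then have "g - c *\<^sub>R h + c *\<^sub>R h \<in> span (insert h S)"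
      by (meson span_add span_base span_mono span_scale insertI1 subsetD subset_insertI)
    then show ?thesis by simp
  qed
qed

lemma subset_span_insert_if_kernel_line:
  fixes A S :: "('a::real_normed_vector \<Rightarrow>\<^sub>L real) set"
  assumes "finite S" "h \<in> A" "h w \<noteq> 0"
    and dec: "\<And>d. \<forall>f\<in>S. f d = 0 \<Longrightarrow> \<exists>l t. (\<forall>f\<in>A. f l = 0) \<and> d = l + t *\<^sub>R w"
  shows "A \<subseteq> span (insert h S)"
proof
  fix f assume f: "f \<in> A"
  define c where "c = f w / h w"
  have "f - c *\<^sub>R h \<in> span S"
  proof (rule blinfun_in_span_if_common_kernel[OF assms(1)], intro allI impI)
    fix x assume "\<forall>f\<in>S. f x = 0"
    then obtain l t where l: "\<forall>f\<in>A. f l = 0" and x: "x = l + t *\<^sub>R w" using dec by blast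
    have "f l = 0" "h l = 0" using l f assms(2) by auto
    then show "(f - c *\<^sub>R h) x = 0"
      using assms(3) by (simp add: x c_def blinfun.diff_left blinfun.scaleR_left
          blinfun.add_right blinfun.scaleR_right)
  qed
  then have "f - c *\<^sub>R h + c *\<^sub>R h \<in> span (insert h S)"
    by (meson span_add span_base span_mono span_scale insertI1 subsetD subset_insertI)
  then show "f \<in> span (insert h S)" by simp
qed

section \<open>Krein--Milman for a polyhedral ball\<close>

locale polyhedral_ball =
  fixes Bas :: "'a::real_normed_vector set"
  assumes finite_Bas: "finite Bas" and independent_Bas: "independent Bas"
    and span_Bas: "span Bas = UNIV"
    and finite_extreme_points: "finite {x::'a. x extreme_point_of cball 0 1}"
begin

sublocale fd: finite_dimensional_vector_space "scaleR :: real \<Rightarrow> 'a \<Rightarrow> 'a" Bas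
  rewrites "module.dependent (*\<^sub>R) = dependent"
    and "module.representation (*\<^sub>R) = representation"
    and "module.subspace (*\<^sub>R) = subspace"
    and "module.span (*\<^sub>R) = span"
    and "vector_space.extend_basis (*\<^sub>R) = extend_basis"
    and "vector_space.dim (*\<^sub>R) = dim"
proof -
  show "finite_dimensional_vector_space (*\<^sub>R) Bas"
    by unfold_locales
      (use finite_Bas independent_Bas span_Bas in \<open>simp_all add: dependent_raw_def span_raw_def\<close>)
qed (simp_all add: dependent_raw_def representation_raw_def
      subspace_raw_def span_raw_def extend_basis_raw_def dim_raw_def)

definition vertices :: "'a set" where
  "vertices = {x. x extreme_point_of cball 0 1}"

lemma finite_vertices: "finite vertices"
  using finite_extreme_points by (simp add: vertices_def)

lemma norm_vertex_le_1: "e \<in> vertices \<Longrightarrow> norm e \<le> 1"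
  by (auto simp: vertices_def extreme_point_of_def)

text \<open>The direction space of the smallest face of the ball containing y.\<close>
definition free_dirs :: "'a \<Rightarrow> 'a set" where
  "free_dirs y = {d. \<exists>\<epsilon>>0. \<forall>s. \<bar>s\<bar> \<le> \<epsilon> \<longrightarrow> norm (y + s *\<^sub>R d) \<le> 1}"

lemma subspace_free_dirs:
  assumes "norm y \<le> 1" shows "subspace (free_dirs y)"
  unfolding subspace_def
proof (intro conjI ballI allI)
  show "0 \<in> free_dirs y" using assms unfolding free_dirs_def by (intro CollectI exI[of _ 1]) simp
next
  fix x z assume "x \<in> free_dirs y" "z \<in> free_dirs y"
  then obtain e1 e2 where e1: "e1 > 0" "\<forall>s. \<bar>s\<bar> \<le> e1 \<longrightarrow> norm (y + s *\<^sub>R x) \<le> 1"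
    and e2: "e2 > 0" "\<forall>s. \<bar>s\<bar> \<le> e2 \<longrightarrow> norm (y + s *\<^sub>R z) \<le> 1"
    unfolding free_dirs_def by auto
  show "x + z \<in> free_dirs y" unfolding free_dirs_def
  proof (intro CollectI exI[of _ "min e1 e2 / 2"] conjI allI impI)
    show "min e1 e2 / 2 > 0" using e1 e2 by auto
    fix s :: real assume s: "\<bar>s\<bar> \<le> min e1 e2 / 2"
    have "y + s *\<^sub>R (x + z) = (1 - 1/2) *\<^sub>R (y + (2 * s) *\<^sub>R x) + (1/2) *\<^sub>R (y + (2 * s) *\<^sub>R z)"
      by (simp add: algebra_simps flip: scaleR_add_left)
    moreover have "norm (y + (2 * s) *\<^sub>R x) \<le> 1" "norm (y + (2 * s) *\<^sub>R z) \<le> 1"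
      using e1(2)[rule_format, of "2 * s"] e2(2)[rule_format, of "2 * s"] s by linarith+
    ultimately show "norm (y + s *\<^sub>R (x + z)) \<le> 1"
      using norm_convex_comb_le_1[of _ _ "1/2"] by simp
  qed
next
  fix c :: real and x assume "x \<in> free_dirs y"
  then obtain e where e: "e > 0" "\<forall>s. \<bar>s\<bar> \<le> e \<longrightarrow> norm (y + s *\<^sub>R x) \<le> 1"
    unfolding free_dirs_def by auto
  show "c *\<^sub>R x \<in> free_dirs y" unfolding free_dirs_def
  proof (intro CollectI exI[of _ "e / (\<bar>c\<bar> + 1)"] conjI allI impI)
    show "e / (\<bar>c\<bar> + 1) > 0" using e by auto
    fix s :: real assume s: "\<bar>s\<bar> \<le> e / (\<bar>c\<bar> + 1)"
    have "\<bar>s * c\<bar> \<le> e / (\<bar>c\<bar> + 1) * (\<bar>c\<bar> + 1)"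
      unfolding abs_mult using s by (intro mult_mono) auto
    then show "norm (y + s *\<^sub>R c *\<^sub>R x) \<le> 1" using e(2)[rule_format, of "s * c"] by simp
  qed
qed

lemma open_segment_dir_in_free_dirs:
  assumes "norm a \<le> 1" "norm b \<le> 1" "y \<in> open_segment a b"
  shows "b - a \<in> free_dirs y"
proof -
  obtain u where u: "0 < u" "u < 1" and y: "y = (1 - u) *\<^sub>R a + u *\<^sub>R b"
    using assms(3) by (auto simp: in_segment)
  show ?thesis unfolding free_dirs_def
  proof (intro CollectI exI[of _ "min u (1 - u)"] conjI allI impI)
    show "min u (1 - u) > 0" using u by simp
    fix s :: real assume "\<bar>s\<bar> \<le> min u (1 - u)"
    then have "0 \<le> u + s" "u + s \<le> 1" by auto
    moreover have "y + s *\<^sub>R (b - a) = (1 - (u + s)) *\<^sub>R a + (u + s) *\<^sub>R b"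
      using y by (simp add: algebra_simps)
    ultimately show "norm (y + s *\<^sub>R (b - a)) \<le> 1"
      using norm_convex_comb_le_1[OF assms(1,2)] by metis
  qed
qed

lemma free_dirs_mono:
  assumes "norm a \<le> 1" "norm b \<le> 1" "y \<in> open_segment a b"
  shows "free_dirs b \<subseteq> free_dirs y"
proof
  fix d assume "d \<in> free_dirs b"
  then obtain e where e: "e > 0" "\<forall>s. \<bar>s\<bar> \<le> e \<longrightarrow> norm (b + s *\<^sub>R d) \<le> 1"
    unfolding free_dirs_def by auto
  obtain l where l: "0 < l" "l < 1" and y: "y = (1 - l) *\<^sub>R a + l *\<^sub>R b"
    using assms(3) by (auto simp: in_segment)
  show "d \<in> free_dirs y" unfolding free_dirs_def
  proof (intro CollectI exI[of _ "l * e"] conjI allI impI)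
    show "l * e > 0" using e l by simp
    fix s :: real assume s: "\<bar>s\<bar> \<le> l * e"
    have "\<bar>s / l\<bar> \<le> e" using s l by (simp add: divide_le_eq abs_divide mult.commute)
    then have "norm (b + (s / l) *\<^sub>R d) \<le> 1" using e by auto
    moreover have "y + s *\<^sub>R d = (1 - l) *\<^sub>R a + l *\<^sub>R (b + (s / l) *\<^sub>R d)"
      using l y by (simp add: algebra_simps)
    ultimately show "norm (y + s *\<^sub>R d) \<le> 1"
      using norm_convex_comb_le_1[OF assms(1), of _ l] l by simp
  qed
qed

lemma extreme_point_iff_free_dirs:
  assumes y: "norm y \<le> 1"
  shows "y extreme_point_of cball 0 1 \<longleftrightarrow> free_dirs y \<subseteq> {0}"
proof
  assume ext: "y extreme_point_of cball 0 1"
  show "free_dirs y \<subseteq> {0}"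
  proof
    fix d assume "d \<in> free_dirs y"
    then obtain e where e: "e > 0" "\<forall>s. \<bar>s\<bar> \<le> e \<longrightarrow> norm (y + s *\<^sub>R d) \<le> 1"
      unfolding free_dirs_def by auto
    have "y + (- e) *\<^sub>R d \<in> cball 0 1" "y + e *\<^sub>R d \<in> cball 0 1"
      using e(2)[rule_format, of "- e"] e(2)[rule_format, of e] e(1) by auto
    then have "y \<notin> open_segment (y + (- e) *\<^sub>R d) (y + e *\<^sub>R d)"
      using ext by (auto simp: extreme_point_of_def)
    moreover have "midpoint (y + (- e) *\<^sub>R d) (y + e *\<^sub>R d) = y"
      by (simp add: midpoint_def algebra_simps flip: scaleR_2)
    ultimately have "y + (- e) *\<^sub>R d = y + e *\<^sub>R d"
      using midpoint_in_open_segment by metis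
    then have "e *\<^sub>R d + e *\<^sub>R d = 0" by (simp add: algebra_simps)
    then have "2 *\<^sub>R (e *\<^sub>R d) = 0" by (simp only: scaleR_2)
    then show "d \<in> {0}" using e(1) by simp
  qed
next
  assume D: "free_dirs y \<subseteq> {0}"
  show "y extreme_point_of cball 0 1"
    unfolding extreme_point_of_def
  proof (intro conjI ballI notI)
    show "y \<in> cball 0 1" using y by simp
    fix a b assume "a \<in> cball (0::'a) 1" "b \<in> cball (0::'a) 1" "y \<in> open_segment a b"
    moreover from this have "b - a \<in> free_dirs y" by (intro open_segment_dir_in_free_dirs) auto
    ultimately show False using D by (auto simp: open_segment_def)
  qed
qed

lemma not_in_free_dirs: "norm y = 1 \<Longrightarrow> y \<notin> free_dirs y"
proof
  assume "norm y = 1" "y \<in> free_dirs y"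
  then obtain e where "e > 0" "\<forall>s. \<bar>s\<bar> \<le> e \<longrightarrow> norm (y + s *\<^sub>R y) \<le> 1"
    unfolding free_dirs_def by blast
  then have "e > 0" "norm (y + e *\<^sub>R y) \<le> 1" by auto
  moreover have "y + e *\<^sub>R y = (1 + e) *\<^sub>R y" by (simp add: algebra_simps)
  ultimately show False using \<open>norm y = 1\<close> by simp
qed

lemma dim_free_dirs_less:
  assumes "norm y = 1" shows "dim (free_dirs y) < card Bas"
proof -
  have "span (free_dirs y) = free_dirs y"
    using assms by (intro span_eq_iff[THEN iffD2] subspace_free_dirs) simp
  then have "span (free_dirs y) \<noteq> UNIV" using not_in_free_dirs[OF assms] by (metis UNIV_I)
  then have "dim (free_dirs y) \<noteq> card Bas"
    using fd.dim_eq_full[of "free_dirs y"] unfolding fd.dimension_def by blast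
  moreover have "dim (free_dirs y) \<le> card Bas"
    using fd.dim_subset_UNIV[of "free_dirs y"] unfolding fd.dimension_def .
  ultimately show ?thesis by linarith
qed

lemma dim_free_dirs_less_if_psubset:
  assumes "norm y \<le> 1" "norm z \<le> 1" "free_dirs z \<subset> free_dirs y"
  shows "dim (free_dirs z) < dim (free_dirs y)"
proof -
  have "span (free_dirs z) = free_dirs z" "span (free_dirs y) = free_dirs y"
    using subspace_free_dirs assms(1,2) by (simp_all add: span_eq_iff)
  then show ?thesis using fd.dim_psubset assms(3) by metis
qed

lemma span_insert_free_dirs:
  assumes y: "norm y = 1" and dy: "dim (free_dirs y) + 1 = card Bas"
  shows "span (insert y (free_dirs y)) = UNIV"
proof -
  have "span (free_dirs y) = free_dirs y"
    using y by (intro span_eq_iff[THEN iffD2] subspace_free_dirs) simp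
  then have "y \<notin> span (free_dirs y)" using not_in_free_dirs[OF y] by metis
  then have "dim (insert y (free_dirs y)) = card Bas"
    using fd.dim_insert[of y "free_dirs y"] dy by simp
  then show ?thesis using fd.dim_eq_full unfolding fd.dimension_def by blast
qed

lemma free_dir_exit_points:
  assumes y: "norm y \<le> 1" and d: "d \<in> free_dirs y" "d \<noteq> 0"
  obtains t0 t1 where "t0 < 0" "0 < t1" "norm (y + t0 *\<^sub>R d) \<le> 1" "norm (y + t1 *\<^sub>R d) \<le> 1"
    "d \<notin> free_dirs (y + t0 *\<^sub>R d)" "d \<notin> free_dirs (y + t1 *\<^sub>R d)"
proof -
  obtain e where e: "e > 0" "\<forall>s. \<bar>s\<bar> \<le> e \<longrightarrow> norm (y + s *\<^sub>R d) \<le> 1"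
    using d(1) unfolding free_dirs_def by auto
  define T where "T = {t. norm (y + t *\<^sub>R d) \<le> 1}"
  have "T \<subseteq> cball 0 (2 / norm d)"
  proof
    fix t assume "t \<in> T"
    then have "norm (t *\<^sub>R d) \<le> 2"
      using y norm_triangle_ineq4[of "y + t *\<^sub>R d" y] by (simp add: T_def)
    then show "t \<in> cball 0 (2 / norm d)" using d(2) by (simp add: field_simps)
  qed
  moreover have "closed T" unfolding T_def by (intro closed_Collect_le continuous_intros)
  ultimately have "compact T" by (meson bounded_cball bounded_subset compact_eq_bounded_closed)
  moreover have eT: "e \<in> T" "- e \<in> T"
    using e(2)[rule_format, of e] e(2)[rule_format, of "- e"] e(1) by (auto simp: T_def)
  ultimately obtain t0 t1 where t0: "t0 \<in> T" "\<forall>t\<in>T. t0 \<le> t" and t1: "t1 \<in> T" "\<forall>t\<in>T. t \<le> t1"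
    using compact_attains_inf[of T] compact_attains_sup[of T] by blast
  show ?thesis
  proof (rule that[of t0 t1])
    show "t0 < 0" using t0(2) eT(2) e(1) by fastforce
    show "0 < t1" using t1(2) eT(1) e(1) by fastforce
    show "norm (y + t0 *\<^sub>R d) \<le> 1" "norm (y + t1 *\<^sub>R d) \<le> 1" using t0 t1 by (auto simp: T_def)
    show "d \<notin> free_dirs (y + t0 *\<^sub>R d)"
    proof
      assume "d \<in> free_dirs (y + t0 *\<^sub>R d)"
      then obtain e' where "e' > 0" "\<forall>s. \<bar>s\<bar> \<le> e' \<longrightarrow> norm (y + t0 *\<^sub>R d + s *\<^sub>R d) \<le> 1"
        unfolding free_dirs_def by blast
      then have "t0 - e' \<in> T" by (auto simp: T_def algebra_simps dest: spec[of _ "- e'"])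
      with t0(2) \<open>e' > 0\<close> show False by fastforce
    qed
    show "d \<notin> free_dirs (y + t1 *\<^sub>R d)"
    proof
      assume "d \<in> free_dirs (y + t1 *\<^sub>R d)"
      then obtain e' where "e' > 0" "\<forall>s. \<bar>s\<bar> \<le> e' \<longrightarrow> norm (y + t1 *\<^sub>R d + s *\<^sub>R d) \<le> 1"
        unfolding free_dirs_def by blast
      then have "t1 + e' \<in> T" by (auto simp: T_def algebra_simps dest: spec[of _ e'])
      with t1(2) \<open>e' > 0\<close> show False by fastforce
    qed
  qed
qed

lemma free_dir_endpoints:
  assumes y: "norm y \<le> 1" and d: "d \<in> free_dirs y" "d \<noteq> 0"
  obtains a b where "y \<in> open_segment a b"
    "\<And>z. z \<in> {a, b} \<Longrightarrow>
      norm z \<le> 1 \<and> free_dirs z \<subset> free_dirs y \<and> z - y \<in> free_dirs y"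
proof -
  obtain t0 t1 where t: "t0 < 0" "0 < t1" "norm (y + t0 *\<^sub>R d) \<le> 1" "norm (y + t1 *\<^sub>R d) \<le> 1"
    "d \<notin> free_dirs (y + t0 *\<^sub>R d)" "d \<notin> free_dirs (y + t1 *\<^sub>R d)"
    using free_dir_exit_points[OF y d] .
  have seg: "y \<in> open_segment (y + t0 *\<^sub>R d) (y + t1 *\<^sub>R d)"
  proof -
    define l where "l = - t0 / (t1 - t0)"
    have "0 < l" "l < 1" using t(1,2) by (auto simp: l_def field_simps)
    moreover have "(1 - l) * t0 + l * t1 = 0" using t(1,2) by (simp add: l_def field_simps)
    then have "y = (1 - l) *\<^sub>R (y + t0 *\<^sub>R d) + l *\<^sub>R (y + t1 *\<^sub>R d)"
      by (simp add: algebra_simps flip: scaleR_add_left)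
    moreover have "y + t0 *\<^sub>R d \<noteq> y + t1 *\<^sub>R d" using t(1,2) d(2) by simp
    ultimately show ?thesis by (auto simp: in_segment)
  qed
  have D: "subspace (free_dirs y)" by (rule subspace_free_dirs[OF y])
  have "norm z \<le> 1 \<and> free_dirs z \<subset> free_dirs y \<and> z - y \<in> free_dirs y"
    if z01: "z = y + t0 *\<^sub>R d \<or> z = y + t1 *\<^sub>R d" for z
  proof -
    obtain t where z: "z = y + t *\<^sub>R d" "norm z \<le> 1" "d \<notin> free_dirs z"
      using z01 t by blast
    have "free_dirs z \<subseteq> free_dirs y"
      using z01 free_dirs_mono[OF t(3,4) seg] free_dirs_mono[OF t(4,3)] seg open_segment_commute
      by metis
    then have "free_dirs z \<subset> free_dirs y" using d(1) z(3) by blast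
    moreover have "z - y \<in> free_dirs y" using subspace_scale[OF D d(1)] z(1) by simp
    ultimately show ?thesis using z(2) by blast
  qed
  then show ?thesis using that[OF seg] by blast
qed

theorem in_convex_hull_free_vertices:
  "norm y \<le> 1 \<Longrightarrow> y \<in> convex hull {e \<in> vertices. e - y \<in> free_dirs y}"
proof (induction "dim (free_dirs y)" arbitrary: y rule: less_induct)
  case less
  let ?V = "\<lambda>y. {e \<in> vertices. e - y \<in> free_dirs y}"
  have D: "subspace (free_dirs y)" by (rule subspace_free_dirs[OF less.prems])
  show ?case
  proof (cases "free_dirs y \<subseteq> {0}")
    case True
    then have "y \<in> ?V y"
      using extreme_point_iff_free_dirs[OF less.prems] subspace_0[OF D] by (simp add: vertices_def)
    then show ?thesis by (rule hull_inc)
  next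
    case False
    then obtain d where "d \<in> free_dirs y" "d \<noteq> 0" by auto
    then obtain a b where seg: "y \<in> open_segment a b" and ends: "\<And>z. z \<in> {a, b} \<Longrightarrow>
        norm z \<le> 1 \<and> free_dirs z \<subset> free_dirs y \<and> z - y \<in> free_dirs y"
      using free_dir_endpoints[OF less.prems] by metis
    have "z \<in> convex hull ?V y" if "z \<in> {a, b}" for z
    proof -
      have "dim (free_dirs z) < dim (free_dirs y)"
        using dim_free_dirs_less_if_psubset less.prems ends[OF that] by blast
      then have "z \<in> convex hull ?V z" using less.hyps ends[OF that] by blast
      moreover have "?V z \<subseteq> ?V y"
      proof
        fix e assume e: "e \<in> ?V z"
        then have "e - z \<in> free_dirs y" using ends[OF that] by auto
        then have "(e - z) + (z - y) \<in> free_dirs y" using subspace_add[OF D] ends[OF that] by blast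
        then show "e \<in> ?V y" using e by simp
      qed
      ultimately show ?thesis by (meson hull_mono subsetD)
    qed
    then have "closed_segment a b \<subseteq> convex hull ?V y"
      by (intro closed_segment_subset convex_convex_hull) auto
    then show ?thesis using seg segment_open_subset_closed by blast
  qed
qed

lemma blinfun_vanishes_on_free_dirs:
  fixes g :: "'a \<Rightarrow>\<^sub>L real"
  assumes g: "\<forall>z. norm z \<le> 1 \<longrightarrow> g z \<le> 1" and "g y = 1" and "d \<in> free_dirs y"
  shows "g d = 0"
proof -
  obtain e where e: "e > 0" "\<forall>s. \<bar>s\<bar> \<le> e \<longrightarrow> norm (y + s *\<^sub>R d) \<le> 1"
    using assms(3) unfolding free_dirs_def by auto
  have "g (y + e *\<^sub>R d) \<le> 1" "g (y + (- e) *\<^sub>R d) \<le> 1"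
    using g e(2)[rule_format, of e] e(2)[rule_format, of "- e"] e(1) by auto
  moreover have "g (y + e *\<^sub>R d) = 1 + e * g d" "g (y + (- e) *\<^sub>R d) = 1 - e * g d"
    using \<open>g y = 1\<close> by (simp_all add: blinfun.add_right blinfun.diff_right blinfun.scaleR_right)
  ultimately have "e * g d = 0" by linarith
  then show ?thesis using e(1) by simp
qed

lemma in_span_supported_vertices:
  fixes g :: "'a \<Rightarrow>\<^sub>L real"
  assumes g: "\<forall>z. norm z \<le> 1 \<longrightarrow> g z \<le> 1" and y: "norm y \<le> 1" "g y = 1"
  shows "y \<in> span {e \<in> vertices. g e = 1}"
proof -
  have "{e \<in> vertices. e - y \<in> free_dirs y} \<subseteq> {e \<in> vertices. g e = 1}"
  proof
    fix e assume e: "e \<in> {e \<in> vertices. e - y \<in> free_dirs y}"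
    then have "g (e - y) = 0" using blinfun_vanishes_on_free_dirs[OF g y(2)] by blast
    with e y(2) show "e \<in> {e \<in> vertices. g e = 1}" by (simp add: blinfun.diff_right)
  qed
  then have "y \<in> convex hull {e \<in> vertices. g e = 1}"
    using in_convex_hull_free_vertices[OF y(1)] hull_mono by (metis subsetD)
  then show ?thesis using convex_hull_subset_span by blast
qed

lemma linear_le_on_cball:
  fixes f :: "'a \<Rightarrow> real"
  assumes "linear f" and "\<forall>e\<in>vertices. f e \<le> c" and "norm y \<le> 1"
  shows "f y \<le> c"
proof -
  have "convex hull vertices \<subseteq> f -` {..c}"
    using assms(2) by (intro hull_minimal convex_linear_vimage[OF assms(1)]) auto
  moreover have "convex hull {e \<in> vertices. e - y \<in> free_dirs y} \<subseteq> convex hull vertices"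
    by (rule hull_mono) blast
  then have "y \<in> convex hull vertices"
    using in_convex_hull_free_vertices[OF assms(3)] by blast
  ultimately show ?thesis by auto
qed

lemma bounded_linear_if_linear:
  fixes f :: "'a \<Rightarrow> real"
  assumes f: "linear f" shows "bounded_linear f"
proof -
  define M where "M = (\<Sum>e\<in>vertices. \<bar>f e\<bar>)"
  have "\<bar>f e\<bar> \<le> M" if "e \<in> vertices" for e
    unfolding M_def by (rule member_le_sum[OF that]) (auto simp: finite_vertices)
  then have "\<forall>e\<in>vertices. f e \<le> M" "\<forall>e\<in>vertices. - f e \<le> M" by (auto simp: abs_le_iff)
  then have M: "\<bar>f z\<bar> \<le> M" if "norm z \<le> 1" for z
    using linear_le_on_cball[OF f _ that] linear_le_on_cball[OF linear_compose_neg[OF f] _ that]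
    by (simp add: abs_le_iff)
  have "\<bar>f x\<bar> \<le> norm x * M" for x
  proof (cases "x = 0")
    case True then show ?thesis using linear_0[OF f] by simp
  next
    case False
    then have "\<bar>f (x /\<^sub>R norm x)\<bar> \<le> M" by (intro M) simp
    then show ?thesis using False by (simp add: linear_scale[OF f] abs_mult field_simps)
  qed
  then show ?thesis using f
    by (intro bounded_linear_intro[of _ M]) (auto simp: linear_add linear_scale)
qed

text \<open>The coordinate functionals make the dual space finite-dimensional, so that dimension
  arguments apply to sets of functionals.\<close>
definition coord :: "'a \<Rightarrow> 'a \<Rightarrow>\<^sub>L real" where
  "coord b = Blinfun (\<lambda>x. representation Bas x b)"

lemma coord_apply: "coord b x = representation Bas x b"
proof -
  have "linear (\<lambda>x. representation Bas x b)"
    by (intro linearI)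
      (simp_all add: representation_add representation_scale independent_Bas span_Bas)
  then show ?thesis
    unfolding coord_def by (simp add: bounded_linear_Blinfun_apply bounded_linear_if_linear)
qed

lemma coord_basis: "b \<in> Bas \<Longrightarrow> b' \<in> Bas \<Longrightarrow> coord b b' = (if b = b' then 1 else 0)"
  by (simp add: coord_apply representation_basis[OF independent_Bas])

lemma inj_on_coord: "inj_on coord Bas"
  by (rule inj_onI) (metis coord_basis one_neq_zero)

lemma blinfun_eq_sum_coord: "(g :: 'a \<Rightarrow>\<^sub>L real) = (\<Sum>b\<in>Bas. g b *\<^sub>R coord b)"
proof (rule blinfun_eqI)
  fix x
  have "(\<Sum>b\<in>Bas. g b *\<^sub>R coord b) x = g (\<Sum>b\<in>Bas. representation Bas x b *\<^sub>R b)"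
    by (simp add: blinfun.sum_left blinfun.sum_right blinfun.scaleR_left blinfun.scaleR_right
        coord_apply mult.commute)
  also have "(\<Sum>b\<in>Bas. representation Bas x b *\<^sub>R b) = x"
    by (rule sum_representation_eq) (auto simp: independent_Bas span_Bas finite_Bas)
  finally show "g x = (\<Sum>b\<in>Bas. g b *\<^sub>R coord b) x" by simp
qed

lemma independent_coord: "independent (coord ` Bas)"
proof (rule independent_if_scalars_zero)
  show "finite (coord ` Bas)" using finite_Bas by simp
  fix u x assume sum0: "(\<Sum>x\<in>coord ` Bas. u x *\<^sub>R x) = 0" and "x \<in> coord ` Bas"
  then obtain b0 where b0: "b0 \<in> Bas" "x = coord b0" by auto
  have "0 = (\<Sum>b\<in>Bas. u (coord b) *\<^sub>R coord b) b0"
    using sum0 by (simp add: sum.reindex[OF inj_on_coord])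
  also have "\<dots> = (\<Sum>b\<in>Bas. u (coord b) * (if b = b0 then 1 else 0))"
    by (auto simp: blinfun.sum_left blinfun.scaleR_left coord_basis b0 intro!: sum.cong)
  also have "\<dots> = u x" using b0 finite_Bas by (simp add: if_distrib sum.delta cong: if_cong)
  finally show "u x = 0" by simp
qed

lemma span_coord: "span (coord ` Bas) = UNIV"
proof -
  have "g \<in> span (coord ` Bas)" for g
    by (subst blinfun_eq_sum_coord[of g]) (intro span_sum span_scale span_base imageI)
  then show ?thesis by auto
qed

sublocale dual: finite_dimensional_vector_space "scaleR :: real \<Rightarrow> ('a \<Rightarrow>\<^sub>L real) \<Rightarrow> _" "coord ` Bas"
  rewrites "module.dependent (*\<^sub>R) = dependent"
    and "module.representation (*\<^sub>R) = representation"
    and "module.subspace (*\<^sub>R) = subspace"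
    and "module.span (*\<^sub>R) = span"
    and "vector_space.extend_basis (*\<^sub>R) = extend_basis"
    and "vector_space.dim (*\<^sub>R) = dim"
proof -
  show "finite_dimensional_vector_space (*\<^sub>R) (coord ` Bas)"
    by unfold_locales (use finite_Bas independent_coord span_coord in
      \<open>simp_all add: dependent_raw_def span_raw_def\<close>)
qed (simp_all add: dependent_raw_def representation_raw_def
      subspace_raw_def span_raw_def extend_basis_raw_def dim_raw_def)

lemma dim_dual: "dim (UNIV :: ('a \<Rightarrow>\<^sub>L real) set) = card Bas"
  using card_image[OF inj_on_coord] by simp

section \<open>Facet functionals\<close>

text \<open>The functionals defining the facets of the ball. Such a functional is determined by the
  vertices on which it attains 1, so there are only finitely many of them.\<close>
definition facet_funs :: "('a \<Rightarrow>\<^sub>L real) set" where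
  "facet_funs = {f :: 'a \<Rightarrow>\<^sub>L real.
    (\<forall>z. norm z \<le> 1 \<longrightarrow> f z \<le> 1) \<and> span {e \<in> vertices. f e = 1} = UNIV}"

lemma facet_fun_le_1: "f \<in> facet_funs \<Longrightarrow> norm z \<le> 1 \<Longrightarrow> f z \<le> 1"
  by (simp add: facet_funs_def)

lemma abs_facet_fun_le_norm: "f \<in> facet_funs \<Longrightarrow> \<bar>f z\<bar> \<le> norm z"
  by (rule abs_blinfun_le_norm_if_le_on_cball) (simp add: facet_funs_def)

lemma facet_funs_eqI:
  assumes "f \<in> facet_funs" "g \<in> facet_funs" "{e \<in> vertices. f e = 1} = {e \<in> vertices. g e = 1}"
  shows "f = g"
proof (rule blinfun_eqI)
  fix x
  have lin: "linear (blinfun_apply h)" for h :: "'a \<Rightarrow>\<^sub>L real"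
    by (simp add: bounded_linear.linear blinfun.bounded_linear_right)
  have "x \<in> span {e \<in> vertices. f e = 1}" using assms(1) by (simp add: facet_funs_def)
  moreover have "f e = g e" if "e \<in> {e \<in> vertices. f e = 1}" for e
    using that assms(3) by auto
  ultimately show "f x = g x" using linear_eq_on_span[OF lin lin] by blast
qed

lemma finite_facet_funs: "finite facet_funs"
proof (rule finite_imageD)
  show "finite ((\<lambda>f :: 'a \<Rightarrow>\<^sub>L real. {e \<in> vertices. f e = 1}) ` facet_funs)"
    by (rule finite_subset[of _ "Pow vertices"]) (use finite_vertices in auto)
  show "inj_on (\<lambda>f :: 'a \<Rightarrow>\<^sub>L real. {e \<in> vertices. f e = 1}) facet_funs"
    by (rule inj_onI) (rule facet_funs_eqI)
qed

lemma le_1_if_vanishes_on_free_dirs: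
  fixes g :: "'a \<Rightarrow> real"
  assumes y: "norm y = 1" and dy: "dim (free_dirs y) + 1 = card Bas"
    and g: "linear g" "g y = 1" "\<forall>d\<in>free_dirs y. g d = 0" and z: "norm z \<le> 1"
  shows "g z \<le> 1"
proof (rule ccontr)
  assume "\<not> g z \<le> 1"
  obtain k where "z - k *\<^sub>R y \<in> span (free_dirs y)"
    using span_insert_free_dirs[OF y dy] span_breakdown_eq[of z y "free_dirs y"] by blast
  moreover have "span (free_dirs y) = free_dirs y"
    using y by (intro span_eq_iff[THEN iffD2] subspace_free_dirs) simp
  ultimately have d: "z - k *\<^sub>R y \<in> free_dirs y" by metis
  have "g z = g (z - k *\<^sub>R y) + k * g y" using g(1) by (simp add: linear_diff linear_scale)
  then have "k > 1" using g(3) d g(2) \<open>\<not> g z \<le> 1\<close> by simp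
  obtain e where e: "e > 0" "\<forall>s. \<bar>s\<bar> \<le> e \<longrightarrow> norm (y + s *\<^sub>R (z - k *\<^sub>R y)) \<le> 1"
    using d unfolding free_dirs_def by blast
  define w where "w = y + (- e) *\<^sub>R (z - k *\<^sub>R y)"
  have w: "norm w \<le> 1" using e(2)[rule_format, of "- e"] e(1) by (simp add: w_def)
  text \<open>The convex combination of w and z cancelling the free direction overshoots y.\<close>
  have "(1 - e / (1 + e)) *\<^sub>R w + (e / (1 + e)) *\<^sub>R z = inverse (1 + e) *\<^sub>R (w + e *\<^sub>R z)"
  proof -
    have "1 - e / (1 + e) = inverse (1 + e)" "e / (1 + e) = inverse (1 + e) * e"
      using e(1) by (simp_all add: field_simps)
    then show ?thesis by (simp add: scaleR_add_right)
  qed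
  also have "w + e *\<^sub>R z = (1 + e * k) *\<^sub>R y" by (simp add: w_def algebra_simps)
  finally have comb: "(1 - e / (1 + e)) *\<^sub>R w + (e / (1 + e)) *\<^sub>R z = ((1 + e * k) / (1 + e)) *\<^sub>R y"
    by (simp add: divide_inverse_commute)
  have "0 \<le> e / (1 + e)" "e / (1 + e) \<le> 1" using e(1) by simp_all
  then have "norm ((1 - e / (1 + e)) *\<^sub>R w + (e / (1 + e)) *\<^sub>R z) \<le> 1"
    by (rule norm_convex_comb_le_1[OF w z])
  then have "norm (((1 + e * k) / (1 + e)) *\<^sub>R y) \<le> 1" by (simp only: comb)
  moreover have "(1 + e * k) / (1 + e) > 1" using e(1) \<open>k > 1\<close> by (simp add: field_simps)
  ultimately show False using y by (simp only: norm_scaleR)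
qed

lemma ex_linear_support:
  assumes y: "norm y = 1" and dy: "dim (free_dirs y) + 1 = card Bas"
  obtains g :: "'a \<Rightarrow> real"
  where "linear g" "g y = 1" "\<forall>d\<in>free_dirs y. g d = 0" "\<forall>z. norm z \<le> 1 \<longrightarrow> g z \<le> 1"
proof -
  have D: "subspace (free_dirs y)" using y by (intro subspace_free_dirs) simp
  obtain Bd where Bd: "Bd \<subseteq> free_dirs y" "independent Bd" "span Bd = free_dirs y"
    by (rule fd.basis_subspace_exists[OF D])
  have "independent (insert y Bd)"
    using Bd not_in_free_dirs[OF y] by (intro independent_insertI) auto
  from linear_independent_extend[OF this, of "\<lambda>x. if x = y then 1 else 0"]
  obtain g :: "'a \<Rightarrow> real" where g: "linear g" "\<forall>x\<in>insert y Bd. g x = (if x = y then 1 else 0)"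
    by blast
  have gy: "g y = 1" using g(2) by simp
  have g0: "\<forall>d\<in>free_dirs y. g d = 0"
  proof
    fix d assume "d \<in> free_dirs y"
    then have "d \<in> span Bd" using Bd(3) by simp
    moreover have "\<forall>x\<in>Bd. g x = 0" using g(2) Bd(1) not_in_free_dirs[OF y] by auto
    ultimately show "g d = 0" using linear_eq_0_on_span[OF g(1)] by blast
  qed
  then show ?thesis using that g(1) gy le_1_if_vanishes_on_free_dirs[OF y dy g(1) gy] by blast
qed

lemma ex_facet_fun:
  assumes y: "norm y = 1" and dy: "dim (free_dirs y) + 1 = card Bas"
  obtains f where "f \<in> facet_funs" "f y = 1"
proof -
  obtain g :: "'a \<Rightarrow> real" where g: "linear g" "g y = 1" "\<forall>d\<in>free_dirs y. g d = 0"
    "\<forall>z. norm z \<le> 1 \<longrightarrow> g z \<le> 1"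
    by (rule ex_linear_support[OF y dy])
  define f where "f = Blinfun g"
  have fg: "f z = g z" for z
    using bounded_linear_if_linear[OF g(1)] by (simp add: f_def bounded_linear_Blinfun_apply)
  have f_le: "\<forall>z. norm z \<le> 1 \<longrightarrow> f z \<le> 1" using g(4) by (simp add: fg)
  let ?S = "{e \<in> vertices. f e = 1}"
  have yS: "y \<in> span ?S" using in_span_supported_vertices[OF f_le] y g(2) by (simp add: fg)
  have "free_dirs y \<subseteq> span ?S"
  proof
    fix d assume d: "d \<in> free_dirs y"
    then obtain e where "e > 0" "\<forall>s. \<bar>s\<bar> \<le> e \<longrightarrow> norm (y + s *\<^sub>R d) \<le> 1"
      unfolding free_dirs_def by blast
    then have e: "e > 0" "norm (y + e *\<^sub>R d) \<le> 1" by auto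
    have "f (y + e *\<^sub>R d) = 1" using g(2,3) d fg linear_add[OF g(1)] linear_scale[OF g(1)] by simp
    then have "y + e *\<^sub>R d \<in> span ?S" using in_span_supported_vertices[OF f_le e(2)] by blast
    then have "inverse e *\<^sub>R ((y + e *\<^sub>R d) - y) \<in> span ?S" by (intro span_scale span_diff yS)
    then show "d \<in> span ?S" using e(1) by simp
  qed
  then have "span (insert y (free_dirs y)) \<subseteq> span ?S"
    using yS by (intro span_minimal) auto
  then have "span ?S = UNIV" using span_insert_free_dirs[OF y dy] by auto
  then have "f \<in> facet_funs" using f_le by (simp add: facet_funs_def)
  then show ?thesis using that g(2) by (simp add: fg)
qed

text \<open>y lies in the affine hull of the vertices of its smallest face, so the genericity of p
  forces that face to be a facet.\<close>
lemma dim_free_dirs_eq_if_generic: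
  assumes y: "norm y = 1" and yx: "y - x = c *\<^sub>R (p - x)" "c \<noteq> 0"
    and generic: "\<And>T. T \<subseteq> vertices \<Longrightarrow> p - x \<in> span ((\<lambda>e. e - x) ` T) \<Longrightarrow>
      span ((\<lambda>e. e - x) ` T) = UNIV"
  shows "dim (free_dirs y) + 1 = card Bas"
proof -
  define T where "T = {e \<in> vertices. e - y \<in> free_dirs y}"
  have "y - x \<in> span ((\<lambda>e. e - x) ` T)"
    using y unfolding T_def
    by (intro diff_in_span_if_in_convex_hull in_convex_hull_free_vertices) simp
  then have "inverse c *\<^sub>R (y - x) \<in> span ((\<lambda>e. e - x) ` T)" by (rule span_scale)
  then have "span ((\<lambda>e. e - x) ` T) = UNIV" using yx generic[of T] by (simp add: T_def)
  moreover have "(\<lambda>e. e - x) ` T \<subseteq> span (insert (y - x) (free_dirs y))"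
  proof
    fix v assume "v \<in> (\<lambda>e. e - x) ` T"
    then obtain e where "e \<in> T" "v = (e - y) + (y - x)" by auto
    moreover from this have "e - y \<in> span (insert (y - x) (free_dirs y))"
      by (auto simp: T_def intro: span_base)
    moreover have "y - x \<in> span (insert (y - x) (free_dirs y))" by (simp add: span_base)
    ultimately show "v \<in> span (insert (y - x) (free_dirs y))" by (metis span_add)
  qed
  ultimately have "card Bas \<le> dim (insert (y - x) (free_dirs y))"
    using fd.dim_mono[of UNIV] span_minimal[OF _ subspace_span] by (metis fd.dim_UNIV)
  also have "\<dots> \<le> dim (free_dirs y) + 1" using fd.dim_insert[of "y - x"] by simp
  finally show ?thesis using dim_free_dirs_less[OF y] by linarith
qed

text \<open>A point outside the ball is separated by the facet through which a generic segment from a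
  small interior point to it leaves the ball.\<close>
theorem norm_le_1_iff_facet_funs: "norm x \<le> 1 \<longleftrightarrow> (\<forall>f\<in>facet_funs. f x \<le> 1)"
proof
  assume "norm x \<le> 1" then show "\<forall>f\<in>facet_funs. f x \<le> 1" using facet_fun_le_1 by blast
next
  assume x: "\<forall>f\<in>facet_funs. f x \<le> 1"
  show "norm x \<le> 1"
  proof (rule ccontr)
    assume "\<not> norm x \<le> 1"
    define UU where "UU = (\<lambda>T. span ((\<lambda>e. e - x) ` T)) ` Pow vertices - {UNIV}"
    have "finite UU" using finite_vertices by (simp add: UU_def)
    moreover have "\<forall>U\<in>UU. subspace U \<and> U \<noteq> UNIV" by (auto simp: UU_def)
    ultimately obtain p where p: "norm p < 1" "\<forall>U\<in>UU. p - x \<notin> U"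
      using ex_in_ball_avoiding_subspaces[of UU 1] by auto
    have "norm x > 1" using \<open>\<not> norm x \<le> 1\<close> by simp
    then obtain \<tau> where \<tau>: "0 < \<tau>" "\<tau> < 1" "norm ((1 - \<tau>) *\<^sub>R p + \<tau> *\<^sub>R x) = 1"
      by (rule segment_crosses_unit_sphere[OF p(1)])
    define y where "y = (1 - \<tau>) *\<^sub>R p + \<tau> *\<^sub>R x"
    have y: "norm y = 1" using \<tau> by (simp add: y_def)
    have "y - x = (1 - \<tau>) *\<^sub>R (p - x)" by (simp add: y_def algebra_simps)
    then have "dim (free_dirs y) + 1 = card Bas"
      using p(2) \<tau>(2) by (intro dim_free_dirs_eq_if_generic[OF y]) (auto simp: UU_def)
    then obtain f where f: "f \<in> facet_funs" "f y = 1" using ex_facet_fun[OF y] by blast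
    have "(1 - \<tau>) * f p < (1 - \<tau>) * 1"
      using abs_facet_fun_le_norm[OF f(1), of p] p(1) \<tau>(2) by (intro mult_strict_left_mono) auto
    moreover have "\<tau> * f x \<le> \<tau> * 1" using x f(1) \<tau>(1) by (intro mult_left_mono) auto
    moreover have "(1 - \<tau>) * 1 + \<tau> * 1 = 1" by simp
    moreover have "f y = (1 - \<tau>) * f p + \<tau> * f x"
      by (simp add: y_def blinfun.add_right blinfun.scaleR_right)
    ultimately show False using f(2) by linarith
  qed
qed

section \<open>Active facets and support functionals\<close>

definition active :: "'a \<Rightarrow> ('a \<Rightarrow>\<^sub>L real) set" where
  "active z = {f \<in> facet_funs. f z = 1}"

lemma finite_active: "finite (active z)"
  using finite_facet_funs by (simp add: active_def)

lemma norm_ge_1_if_active: "f \<in> active z \<Longrightarrow> 1 \<le> norm z"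
  using abs_facet_fun_le_norm[of f z] by (simp add: active_def)

lemma active_midpoint:
  assumes "norm a \<le> 1" "norm b \<le> 1"
  shows "active (midpoint a b) = active a \<inter> active b"
proof (intro set_eqI iffI)
  fix f assume "f \<in> active (midpoint a b)"
  then have f: "f \<in> facet_funs" "f a / 2 + f b / 2 = 1"
    by (auto simp: active_def midpoint_def blinfun.add_right blinfun.scaleR_right)
  moreover have "f a \<le> 1" "f b \<le> 1" using f(1) assms facet_fun_le_1 by auto
  ultimately show "f \<in> active a \<inter> active b" by (auto simp: active_def)
qed (auto simp: active_def midpoint_def blinfun.add_right blinfun.scaleR_right)

lemma active_shift:
  assumes z: "norm z \<le> 1" and w: "\<forall>f\<in>active z. f w \<le> 0"
  obtains \<epsilon> where "\<epsilon> > 0"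
    "\<And>t. 0 < t \<Longrightarrow> t \<le> \<epsilon> \<Longrightarrow> norm (z + t *\<^sub>R w) \<le> 1 \<and> active (z + t *\<^sub>R w) = {f \<in> active z. f w = 0}"
proof -
  have "\<forall>f\<in>facet_funs - active z. f z < 1"
    using z facet_fun_le_1 by (force simp: active_def)
  then obtain \<epsilon> where \<epsilon>: "\<epsilon> > 0" "\<forall>f\<in>facet_funs - active z. \<forall>t. \<bar>t\<bar> \<le> \<epsilon> \<longrightarrow> f z + t * f w < 1"
    using ex_uniform_margin[of "facet_funs - active z" "\<lambda>f. f z" "\<lambda>f. f w"] finite_facet_funs
    by blast
  show ?thesis
  proof (rule that[OF \<epsilon>(1)])
    fix t :: real assume t: "0 < t" "t \<le> \<epsilon>"
    have ft: "f (z + t *\<^sub>R w) = f z + t * f w" for f :: "'a \<Rightarrow>\<^sub>L real"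
      by (simp add: blinfun.add_right blinfun.scaleR_right)
    have inactive: "f (z + t *\<^sub>R w) < 1" if "f \<in> facet_funs" "f \<notin> active z" for f
      using \<epsilon>(2) that t ft by auto
    have "f (z + t *\<^sub>R w) \<le> 1" if "f \<in> facet_funs" for f
    proof (cases "f \<in> active z")
      case True
      then have "f z = 1" "t * f w \<le> 0" using w t(1) by (auto simp: active_def mult_nonneg_nonpos)
      then show ?thesis by (simp add: ft)
    qed (use inactive that in fastforce)
    then have "norm (z + t *\<^sub>R w) \<le> 1" by (simp add: norm_le_1_iff_facet_funs)
    moreover have "active (z + t *\<^sub>R w) = {f \<in> active z. f w = 0}"
    proof (intro set_eqI iffI)
      fix f assume "f \<in> active (z + t *\<^sub>R w)"
      then have f: "f \<in> facet_funs" "f (z + t *\<^sub>R w) = 1" by (auto simp: active_def)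
      then have "f \<in> active z" using inactive by fastforce
      with f t(1) show "f \<in> {f \<in> active z. f w = 0}" by (simp add: active_def ft)
    qed (simp add: active_def ft)
    ultimately show "norm (z + t *\<^sub>R w) \<le> 1 \<and> active (z + t *\<^sub>R w) = {f \<in> active z. f w = 0}" ..
  qed
qed

lemma active_nonempty:
  assumes z: "norm z = 1" shows "active z \<noteq> {}"
proof
  assume "active z = {}"
  then obtain \<epsilon> where "\<epsilon> > 0" "\<And>t. 0 < t \<Longrightarrow> t \<le> \<epsilon> \<Longrightarrow>
      norm (z + t *\<^sub>R z) \<le> 1 \<and> active (z + t *\<^sub>R z) = {f \<in> active z. f z = 0}"
    using active_shift[of z z] z by auto
  then have "norm ((1 + \<epsilon>) *\<^sub>R z) \<le> 1" by (simp add: algebra_simps)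
  with \<open>\<epsilon> > 0\<close> z show False by simp
qed

lemma common_kernel_subset_free_dirs:
  assumes z: "norm z \<le> 1" and d: "\<forall>f\<in>active z. f d = 0"
  shows "d \<in> free_dirs z"
proof -
  have "\<forall>f\<in>active z. f d \<le> 0" "\<forall>f\<in>active z. f (- d) \<le> 0"
    using d by (simp_all add: blinfun.minus_right)
  obtain \<epsilon>1 where \<epsilon>1: "\<epsilon>1 > 0" "\<And>t. 0 < t \<Longrightarrow> t \<le> \<epsilon>1 \<Longrightarrow>
      norm (z + t *\<^sub>R d) \<le> 1 \<and> active (z + t *\<^sub>R d) = {f \<in> active z. f d = 0}"
    using active_shift[OF z \<open>\<forall>f\<in>active z. f d \<le> 0\<close>] by blast
  obtain \<epsilon>2 where \<epsilon>2: "\<epsilon>2 > 0" "\<And>t. 0 < t \<Longrightarrow> t \<le> \<epsilon>2 \<Longrightarrow>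
      norm (z + t *\<^sub>R - d) \<le> 1 \<and> active (z + t *\<^sub>R - d) = {f \<in> active z. f (- d) = 0}"
    using active_shift[OF z \<open>\<forall>f\<in>active z. f (- d) \<le> 0\<close>] by blast
  have "norm (z + s *\<^sub>R d) \<le> 1" if "\<bar>s\<bar> \<le> min \<epsilon>1 \<epsilon>2" for s
  proof -
    consider "s = 0" | "s > 0" | "s < 0" by linarith
    then show ?thesis
    proof cases
      case 2 then show ?thesis using \<epsilon>1(2)[of s] that by auto
    next
      case 3 then show ?thesis using \<epsilon>2(2)[of "- s"] that by auto
    qed (use z in simp)
  qed
  then show ?thesis using \<epsilon>1(1) \<epsilon>2(1) unfolding free_dirs_def
    by (intro CollectI exI[of _ "min \<epsilon>1 \<epsilon>2"]) auto
qed

lemma span_supp_funcs_eq_span_active: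
  assumes z: "norm z = 1"
  shows "span (supp_funcs z) = span (active z)"
proof
  have "active z \<subseteq> supp_funcs z"
  proof
    fix f assume f: "f \<in> active z"
    then have "norm f \<le> 1" using abs_facet_fun_le_norm
      by (intro norm_blinfun_bound) (auto simp: active_def)
    moreover have "1 \<le> norm f" using norm_blinfun[of f z] f z by (simp add: active_def)
    ultimately show "f \<in> supp_funcs z" using f z by (simp add: supp_funcs_def active_def)
  qed
  then show "span (active z) \<subseteq> span (supp_funcs z)" by (rule span_mono)
  have "supp_funcs z \<subseteq> span (active z)"
  proof
    fix g assume "g \<in> supp_funcs z"
    then have g: "norm g = 1" "g z = 1" using z by (auto simp: supp_funcs_def)
    have "g y \<le> 1" if "norm y \<le> 1" for y
    proof -
      have "\<bar>g y\<bar> \<le> norm y" using norm_blinfun[of g y] g(1) by simp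
      then show ?thesis using that by linarith
    qed
    then have le: "\<forall>y. norm y \<le> 1 \<longrightarrow> g y \<le> 1" by blast
    show "g \<in> span (active z)"
    proof (rule blinfun_in_span_if_common_kernel[OF finite_active], intro allI impI)
      fix d assume "\<forall>f\<in>active z. f d = 0"
      then have "d \<in> free_dirs z" using z by (intro common_kernel_subset_free_dirs) simp
      then show "g d = 0" by (rule blinfun_vanishes_on_free_dirs[OF le g(2)])
    qed
  qed
  then show "span (supp_funcs z) \<subseteq> span (active z)" by (rule span_minimal) simp
qed

lemma dim_active_extreme_point:
  assumes x: "x extreme_point_of cball 0 1"
  shows "dim (active x) = card Bas"
proof -
  have nx: "norm x \<le> 1" using x by (simp add: extreme_point_of_def)
  have "g \<in> span (active x)" for g
  proof (rule blinfun_in_span_if_common_kernel[OF finite_active], intro allI impI)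
    fix d assume "\<forall>f\<in>active x. f d = 0"
    then have "d = 0"
      using common_kernel_subset_free_dirs[OF nx] extreme_point_iff_free_dirs[OF nx] x by blast
    then show "g d = 0" by simp
  qed
  then have "span (active x) = UNIV" by auto
  then show ?thesis using dim_dual by (metis dim_span)
qed

section \<open>Faces of polyhedral cones\<close>

lemma ex_dir_off_kernel_line:
  fixes A :: "('a \<Rightarrow>\<^sub>L real) set"
  assumes "finite A" "S \<subseteq> A" "h \<in> A" "h w \<noteq> 0" "dim S + 1 < dim A"
  obtains d where "\<forall>f\<in>S. f d = 0" "\<exists>f\<in>A. f d > 0"
    "\<And>l t. \<forall>f\<in>A. f l = 0 \<Longrightarrow> d \<noteq> l + t *\<^sub>R w"
proof -
  have "\<exists>d. (\<forall>f\<in>S. f d = 0) \<and> (\<forall>l t. (\<forall>f\<in>A. f l = 0) \<longrightarrow> d \<noteq> l + t *\<^sub>R w)"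
  proof (rule ccontr)
    assume "\<not> ?thesis"
    then have "A \<subseteq> span (insert h S)"
      using assms(1-4) finite_subset by (intro subset_span_insert_if_kernel_line) blast+
    then have "dim A \<le> dim (insert h S)" by (rule dual.dim_mono)
    also have "\<dots> \<le> dim S + 1" using dual.dim_insert[of h S] by simp
    finally show False using assms(5) by simp
  qed
  then obtain d where dS: "\<forall>f\<in>S. f d = 0" and dL: "\<forall>l t. (\<forall>f\<in>A. f l = 0) \<longrightarrow> d \<noteq> l + t *\<^sub>R w"
    by blast
  have "\<exists>f\<in>A. f d \<noteq> 0" using dL[rule_format, of d 0] by auto
  then consider "\<exists>f\<in>A. f d > 0" | "\<exists>f\<in>A. f (- d) > 0"
    by (metis blinfun.minus_right linorder_neqE_linordered_idom neg_0_less_iff_less)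
  then show ?thesis
  proof cases
    case 1 then show ?thesis using that dS dL by blast
  next
    case 2
    moreover have "- d \<noteq> l + t *\<^sub>R w" if "\<forall>f\<in>A. f l = 0" for l t
    proof
      assume "- d = l + t *\<^sub>R w"
      then have "d = - l + (- t) *\<^sub>R w" by (metis minus_add_distrib minus_minus scaleR_minus_left)
      moreover have "\<forall>f\<in>A. f (- l) = 0" using that by (simp add: blinfun.minus_right)
      ultimately show False using dL by blast
    qed
    moreover have "\<forall>f\<in>S. f (- d) = 0" using dS by (simp add: blinfun.minus_right)
    ultimately show ?thesis using that[of "- d"] by blast
  qed
qed

text \<open>Faces of the cone where all functionals in A are nonpositive correspond to the sets of
  functionals vanishing on them. Unless the face of w is already an extreme ray (modulo the common
  kernel of A), it contains a face on which more independent functionals vanish.\<close>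
lemma cone_ex_lower_face:
  fixes A :: "('a \<Rightarrow>\<^sub>L real) set"
  assumes finA: "finite A" and w: "\<forall>f\<in>A. f w \<le> 0" and h: "h \<in> A" "h w \<noteq> 0"
    and codim: "dim {f\<in>A. f w = 0} + 1 < dim A"
  obtains v where "\<forall>f\<in>A. f v \<le> 0" "{f\<in>A. f w = 0} \<subseteq> {f\<in>A. f v = 0}" "\<exists>f\<in>A. f v \<noteq> 0"
    "dim {f\<in>A. f w = 0} < dim {f\<in>A. f v = 0}"
proof -
  define S where "S = {f\<in>A. f w = 0}"
  obtain d where dS: "\<forall>f\<in>S. f d = 0" and dpos: "\<exists>f\<in>A. f d > 0"
    and dL: "\<And>l t. \<forall>f\<in>A. f l = 0 \<Longrightarrow> d \<noteq> l + t *\<^sub>R w"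
    using ex_dir_off_kernel_line[OF finA _ h codim] by (auto simp: S_def)
  text \<open>Move from w along d until a new functional vanishes.\<close>
  obtain t g where t: "t \<ge> 0" "g \<in> A" "g d > 0" "g w + t * g d = 0" "\<forall>f\<in>A. f w + t * f d \<le> 0"
    using ratio_test[OF finA, of "\<lambda>f. f w" "\<lambda>f. f d"] w dpos by blast
  define v where "v = w + t *\<^sub>R d"
  have fv: "f v = f w + t * f d" for f :: "'a \<Rightarrow>\<^sub>L real"
    by (simp add: v_def blinfun.add_right blinfun.scaleR_right)
  have Sv: "insert g S \<subseteq> {f\<in>A. f v = 0}" using t dS by (auto simp: S_def fv)
  have nz: "\<exists>f\<in>A. f v \<noteq> 0"
  proof (rule ccontr)
    assume "\<not> (\<exists>f\<in>A. f v \<noteq> 0)"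
    then have ker: "\<forall>f\<in>A. f v = 0" by blast
    show False
    proof (cases "t = 0")
      case True then show False using ker h by (simp add: v_def)
    next
      case False
      have "\<forall>f\<in>A. f (inverse t *\<^sub>R v) = 0" using ker by (simp add: blinfun.scaleR_right)
      moreover have "d = inverse t *\<^sub>R v + (- inverse t) *\<^sub>R w"
        using False by (simp add: v_def algebra_simps)
      ultimately show False using dL by blast
    qed
  qed
  have "g \<notin> span S" using blinfun_eq_0_if_in_span[OF dS] t(3) by auto
  then have "dim S < dim (insert g S)" using dual.dim_insert[of g S] by simp
  also have "\<dots> \<le> dim {f\<in>A. f v = 0}" using Sv by (rule dual.dim_subset)
  finally have "dim S < dim {f\<in>A. f v = 0}" .
  moreover have "\<forall>f\<in>A. f v \<le> 0" using t(5) by (simp add: fv)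
  moreover have "S \<subseteq> {f\<in>A. f v = 0}" using Sv by blast
  ultimately show ?thesis using that[of v] nz by (simp add: S_def)
qed

text \<open>Taking w with a maximal-dimensional set of vanishing functionals in the face of w0 yields an
  extreme ray of that face.\<close>
lemma cone_face_ex_extreme_ray:
  fixes A :: "('a \<Rightarrow>\<^sub>L real) set"
  assumes finA: "finite A" and w0: "\<forall>f\<in>A. f w0 \<le> 0" "\<exists>f\<in>A. f w0 \<noteq> 0"
  obtains w where "\<forall>f\<in>A. f w \<le> 0" "{f\<in>A. f w0 = 0} \<subseteq> {f\<in>A. f w = 0}"
    "dim {f\<in>A. f w = 0} + 1 = dim A"
proof -
  define good where "good w \<longleftrightarrow>
    (\<forall>f\<in>A. f w \<le> 0) \<and> {f\<in>A. f w0 = 0} \<subseteq> {f\<in>A. f w = 0} \<and> (\<exists>f\<in>A. f w \<noteq> 0)" for w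
  have "\<forall>v. good v \<longrightarrow> dim {f\<in>A. f v = 0} < Suc (card Bas)"
    using dual.dim_subset_UNIV dim_dual by (simp add: dual.dimension_def less_Suc_eq_le)
  moreover have "good w0" using w0 by (simp add: good_def)
  ultimately obtain w where gw: "good w"
    and wmax: "\<And>v. good v \<Longrightarrow> dim {f\<in>A. f v = 0} \<le> dim {f\<in>A. f w = 0}"
    using ex_has_greatest_nat[of good w0 "\<lambda>v. dim {f\<in>A. f v = 0}"] by blast
  define S where "S = {f\<in>A. f w = 0}"
  obtain h where h: "h \<in> A" "h w \<noteq> 0" using gw by (auto simp: good_def)
  have "h \<notin> span S" using blinfun_eq_0_if_in_span[of S w h] h(2) by (auto simp: S_def)
  then have "span S \<noteq> span A" using h(1) span_base by blast
  then have "dim S < dim A" using dual.dim_eq_span[of S A] by (force simp: S_def)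
  moreover have "dim A \<le> dim S + 1"
  proof (rule ccontr)
    assume "\<not> dim A \<le> dim S + 1"
    then have "dim {f\<in>A. f w = 0} + 1 < dim A" by (simp add: S_def)
    moreover have "\<forall>f\<in>A. f w \<le> 0" using gw by (simp add: good_def)
    ultimately obtain v where "\<forall>f\<in>A. f v \<le> 0" "S \<subseteq> {f\<in>A. f v = 0}" "\<exists>f\<in>A. f v \<noteq> 0"
      "dim S < dim {f\<in>A. f v = 0}"
      using cone_ex_lower_face[OF finA _ h] unfolding S_def by blast
    moreover from this have "good v" using gw by (auto simp: good_def S_def)
    ultimately show False using wmax by (force simp: S_def)
  qed
  ultimately show ?thesis using that gw by (auto simp: good_def S_def)
qed

section \<open>Approaching an extreme point of a facet\<close>

lemma active_dim_step:
  assumes z: "norm z = 1" "\<phi> \<in> active z" and p: "norm p \<le> 1" "active p = {\<phi>}"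
    and "2 \<le> dim (active z)" "\<delta> > 0"
  obtains q where "norm (q - z) \<le> \<delta>" "norm q = 1" "\<phi> \<in> active q"
    "dim (active q) + 1 = dim (active z)"
proof -
  text \<open>Head from z towards p, which lies on the facet of \<phi> only, but along an extreme ray of
    the cone of feasible directions.\<close>
  have w0: "\<forall>f\<in>active z. f (p - z) \<le> 0"
    using p(1) facet_fun_le_1 by (auto simp: active_def blinfun.diff_right)
  have "\<exists>f\<in>active z. f (p - z) \<noteq> 0"
  proof (rule ccontr)
    assume "\<not> ?thesis"
    then have "active z \<subseteq> active p" by (auto simp: active_def blinfun.diff_right)
    then have "dim (active z) \<le> dim {\<phi>}" using p(2) dual.dim_subset by metis
    also have "\<dots> \<le> 1" using dual.dim_insert[of \<phi> "{}"] by simp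
    finally show False using assms(5) by simp
  qed
  then obtain w where w: "\<forall>f\<in>active z. f w \<le> 0"
      "{f\<in>active z. f (p - z) = 0} \<subseteq> {f\<in>active z. f w = 0}"
      "dim {f\<in>active z. f w = 0} + 1 = dim (active z)"
    using cone_face_ex_extreme_ray[OF finite_active w0] by blast
  have "\<phi> (p - z) = 0" using z(2) p(2) by (auto simp: active_def blinfun.diff_right)
  then have \<phi>w: "\<phi> \<in> {f\<in>active z. f w = 0}" using w(2) z(2) by blast
  obtain \<epsilon> where \<epsilon>: "\<epsilon> > 0" "\<And>t. 0 < t \<Longrightarrow> t \<le> \<epsilon> \<Longrightarrow>
      norm (z + t *\<^sub>R w) \<le> 1 \<and> active (z + t *\<^sub>R w) = {f \<in> active z. f w = 0}"
    using active_shift[OF _ w(1)] z(1) by auto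
  have nw: "0 < norm w + 1" using norm_ge_zero[of w] by linarith
  define t where "t = min \<epsilon> (\<delta> / (norm w + 1))"
  have t: "0 < t" "t \<le> \<epsilon>" using \<epsilon>(1) \<open>\<delta> > 0\<close> nw by (auto simp: t_def)
  define q where "q = z + t *\<^sub>R w"
  have q: "norm q \<le> 1" "active q = {f \<in> active z. f w = 0}"
    using \<epsilon>(2)[OF t] by (simp_all add: q_def)
  then have "\<phi> \<in> active q" using \<phi>w by simp
  then have "norm q = 1" using q(1) norm_ge_1_if_active by force
  have "t \<le> \<delta> / (norm w + 1)" by (simp add: t_def)
  then have "t * (norm w + 1) \<le> \<delta>" using nw by (simp add: pos_le_divide_eq)
  then have "norm (q - z) \<le> \<delta>" using t(1) by (simp add: q_def algebra_simps)
  then show ?thesis using that \<open>norm q = 1\<close> \<open>\<phi> \<in> active q\<close> q(2) w(3) by simp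
qed

lemma descend_to_active_dim:
  assumes "norm z = 1" "\<phi> \<in> active z" "norm p \<le> 1" "active p = {\<phi>}"
    and "1 \<le> m" "m \<le> dim (active z)" "\<delta> > 0"
  shows "\<exists>q. norm (q - z) \<le> \<delta> \<and> norm q = 1 \<and> \<phi> \<in> active q \<and> dim (active q) = m"
  using assms(1,2,6,7)
proof (induction "dim (active z) - m" arbitrary: z \<delta>)
  case 0 then show ?case by (intro exI[of _ z]) auto
next
  case (Suc j)
  have "2 \<le> dim (active z)" "\<delta> / 2 > 0" using Suc.hyps(2) Suc.prems(4) assms(5) by auto
  then obtain q1 where q1: "norm (q1 - z) \<le> \<delta> / 2" "norm q1 = 1" "\<phi> \<in> active q1"
      "dim (active q1) + 1 = dim (active z)"
    by (rule active_dim_step[OF Suc.prems(1,2) assms(3,4)])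
  moreover have "j = dim (active q1) - m" "m \<le> dim (active q1)" using Suc.hyps(2) q1(4) by auto
  ultimately obtain q where "norm (q - q1) \<le> \<delta> / 2" "norm q = 1" "\<phi> \<in> active q" "dim (active q) = m"
    using Suc.hyps(1) \<open>\<delta> / 2 > 0\<close> by blast
  then show ?case using q1(1) norm_diff_triangle_le[of q q1 "\<delta> / 2" z "\<delta> / 2"] by auto
qed

lemma facet_fun_face:
  assumes "g \<in> facet_funs"
  shows "cball 0 1 \<inter> {y. g y = 1} face_of cball 0 1" "cball 0 1 \<inter> {y. g y = 1} \<noteq> cball 0 1"
proof -
  show "cball 0 1 \<inter> {y. g y = 1} face_of cball 0 1"
    using assms facet_fun_le_1 by (intro face_of_supporting_functional)
      (auto simp: bounded_linear.linear blinfun.bounded_linear_right)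
  have "(0::'a) \<notin> cball 0 1 \<inter> {y. g y = 1}" by simp
  then show "cball 0 1 \<inter> {y. g y = 1} \<noteq> cball 0 1" by (metis centre_in_cball zero_le_one)
qed

text \<open>A point of F with fewest active facets lies in the relative interior of F.\<close>
lemma active_subset_if_min_card:
  assumes "convex F" "F \<subseteq> cball 0 1" "p \<in> F" "y \<in> F"
    and pmin: "\<And>y. y \<in> F \<Longrightarrow> card (active p) \<le> card (active y)"
  shows "active p \<subseteq> active y"
proof -
  have "(1/2) *\<^sub>R p + (1/2) *\<^sub>R y \<in> F" using convexD[OF assms(1,3,4)] by simp
  then have "midpoint p y \<in> F" by (simp add: midpoint_def scaleR_add_right)
  then have "card (active p) \<le> card (active p \<inter> active y)"
    using pmin active_midpoint assms(2-4) by (metis mem_cball_0 subsetD)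
  then have "active p \<inter> active y = active p"
    using card_seteq[OF finite_active] by (metis inf_le1)
  then show ?thesis by blast
qed

lemma facet_exposed:
  assumes facet: "facet_max F (cball 0 1)" and "F \<noteq> {}"
  obtains \<phi> p where "\<phi> \<in> facet_funs" "F = cball 0 1 \<inter> {y. \<phi> y = 1}" "p \<in> F" "active p = {\<phi>}"
proof -
  have F: "F face_of cball 0 1" "F \<noteq> cball 0 1"
    and Fmax: "\<And>G. G face_of cball 0 1 \<Longrightarrow> G \<noteq> cball 0 1 \<Longrightarrow> F \<subseteq> G \<Longrightarrow> G = F"
    using facet by (auto simp: facet_max_def)
  have sphere: "norm y = 1" if "y \<in> F" for y using face_of_cball_subset_sphere[OF F] that by auto
  obtain p where p: "p \<in> F" and pmin: "\<And>y. y \<in> F \<Longrightarrow> card (active p) \<le> card (active y)"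
    using ex_has_least_nat[of "\<lambda>y. y \<in> F" _ "\<lambda>y. card (active y)"] \<open>F \<noteq> {}\<close> by blast
  have exposed: "F = cball 0 1 \<inter> {y. g y = 1}" if g: "g \<in> active p" for g
  proof (rule Fmax[symmetric])
    show "cball 0 1 \<inter> {y. g y = 1} face_of cball 0 1" "cball 0 1 \<inter> {y. g y = 1} \<noteq> cball 0 1"
      using facet_fun_face g by (auto simp: active_def)
    have "active p \<subseteq> active y" if "y \<in> F" for y
      using face_of_imp_convex[OF F(1)] face_of_imp_subset[OF F(1)] p that pmin
      by (rule active_subset_if_min_card)
    then show "F \<subseteq> cball 0 1 \<inter> {y. g y = 1}" using g sphere by (auto simp: active_def)
  qed
  obtain \<phi> where \<phi>: "\<phi> \<in> active p" using active_nonempty[OF sphere[OF p]] by blast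
  text \<open>All functionals active at p expose F, hence agree on the vertices.\<close>
  have "g = \<phi>" if g: "g \<in> active p" for g
  proof (rule facet_funs_eqI)
    show "g \<in> facet_funs" "\<phi> \<in> facet_funs" using g \<phi> by (auto simp: active_def)
    have "cball 0 1 \<inter> {y. g y = 1} = cball 0 1 \<inter> {y. \<phi> y = 1}"
      using exposed[OF g] exposed[OF \<phi>] by simp
    then show "{e \<in> vertices. g e = 1} = {e \<in> vertices. \<phi> e = 1}"
      using norm_vertex_le_1 by (auto simp: set_eq_iff)
  qed
  then have "active p = {\<phi>}" using \<phi> by blast
  then show ?thesis using that \<phi> exposed p by (auto simp: active_def)
qed

theorem extreme_point_of_facet_in_closure_k_smooth:
  fixes F :: "'a set"
  assumes facet: "facet_max F (cball 0 1)" and x: "x extreme_point_of F"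
    and k: "1 \<le> k" "k < card Bas"
  shows "x \<in> closure (k_smooth k \<inter> F)"
proof -
  have xF: "x \<in> F" using x by (simp add: extreme_point_of_def)
  then obtain \<phi> p where \<phi>: "\<phi> \<in> facet_funs" "F = cball 0 1 \<inter> {y. \<phi> y = 1}"
    and p: "p \<in> F" "active p = {\<phi>}"
    using facet_exposed[OF facet] by blast
  have \<phi>x: "\<phi> \<in> active x" using xF \<phi> by (auto simp: active_def)
  then have nx: "norm x = 1" using norm_ge_1_if_active xF \<phi>(2) by force
  have "x extreme_point_of cball 0 1"
    using x xF facet extreme_point_of_face by (auto simp: facet_max_def)
  then have dx: "k \<le> dim (active x)" using dim_active_extreme_point k by simp
  show ?thesis unfolding closure_approachable
  proof (intro allI impI)
    fix e :: real assume "e > 0"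
    moreover have "norm p \<le> 1" using p(1) \<phi>(2) by simp
    ultimately obtain q where q: "norm (q - x) \<le> e / 2" "norm q = 1" "\<phi> \<in> active q"
      "dim (active q) = k"
      using descend_to_active_dim[OF nx \<phi>x _ p(2) k(1) dx, of "e / 2"] by auto
    have "q \<in> F" using q(2,3) \<phi>(2) by (simp add: active_def)
    moreover have "q \<in> k_smooth k"
      using q(2,4) span_eq_dim[OF span_supp_funcs_eq_span_active[OF q(2)]]
      by (auto simp: k_smooth_def)
    moreover have "dist q x < e" using q(1) \<open>e > 0\<close> by (simp add: dist_norm)
    ultimately show "\<exists>y\<in>k_smooth k \<inter> F. dist y x < e" by blast
  qed
qed

end

theorem mainTheorem18:
  fixes F :: "'a::real_normed_vector set" and n k :: nat
  assumes "\<exists>B::'a set. finite B \<and> independent B \<and> span B = UNIV"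
    and "dim (UNIV::'a set) = n"
    and "polyhedral_space TYPE('a)"
    and "facet_max F (cball 0 1)"
    and "1 \<le> k" and "k < n"
  shows "{x. x extreme_point_of F} \<subseteq> closure (k_smooth k \<inter> F)"
proof -
  obtain B :: "'a set" where B: "finite B" "independent B" "span B = UNIV" using assms(1) by blast
  interpret polyhedral_ball B
    using B assms(3) by unfold_locales (auto simp: polyhedral_space_def)
  show ?thesis
    using extreme_point_of_facet_in_closure_k_smooth[OF assms(4) _ assms(5)] assms(2,6) by auto
qed

end
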